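(* The distributive law $\lambda$ of the free monad $\mathcal T_\Sigma$ over the cofree copointed functor $\langle\mathrm{Id}\times F,\pi_1\rangle$, induced by the abstract GSOS specification $\rho$ below, preserves the axioms of idempotent semirings. Consequently there is a distributive law $\kappa$ of the monad $\mathcal P_\omega((-)^* )$ over $\langle\mathrm{Id}\times F,\pi_1\rangle$ such that $i\circ q\colon\lambda\Rightarrow\kappa$ is a morphism of distributive laws. Here: - $q\colon T_\Sigma\Rightarrow T'$ is the quotient map to the free idempotent semiring monad; - $i\colon T'\Rightarrow\mathcal P_\omega((-)^* )$ is the monad isomorphism.
   Context: Work in $\mathrm{Set}$. Let $A$ be a set and $FX=2\times X^A$, where $2=\{0,1\}$. The signature functor is $\Sigma X=1+1+X\times X+X\times X$, with constants $\mathbf 0,\mathbf 1$ and binary operations $+,\cdot$. $\mathcal T_\Sigma$ is the free monad over $\Sigma$ ($T_\Sigma X$ = terms over $X$). The idempotent semiring axioms are: - $(x+y)+z=x+(y+z)$, $x+y=y+x$, $x+\mathbf 0=x$, $x+x=x$; - $(xy)z=x(yz)$, $\mathbf 1x=x=x\mathbf 1$; - $x(y+z)=xy+xz$, $(x+y)z=xz+yz$; - $\mathbf 0x=\mathbf 0=x\mathbf 0$. The monad $\mathcal P_\omega((-)^* )$ is defined by: - it sends $X$ to the set of finite sets of finite words over $X$; - $\mathcal P_\omega(f^* )(L)=\{f(x_1)\cdots f(x_n)\mid x_1\cdots x_n\in L\}$; - unit $x\mapsto\{x\}$; - multiplication $\mathcal L\mapsto\bigcup_{L_1\cdots L_n\in\mathcal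 L}\{w_1\cdots w_n\mid w_i\in L_i\}$. This monad is isomorphic to the quotient of $\mathcal T_\Sigma$ by the idempotent semiring axioms. A copointed functor is $\langle H,\epsilon\rangle$ with $\epsilon\colon H\Rightarrow\mathrm{Id}$. A distributive law over it is a distributive law $\lambda$ of the monad over $H$ satisfying $\epsilon_T\circ\lambda=T\epsilon$. Abstract GSOS specifications $\rho\colon\Sigma(\mathrm{Id}\times F)\Rightarrow FT_\Sigma$ correspond bijectively to distributive laws of $\mathcal T_\Sigma$ over $\langle\mathrm{Id}\times F,\pi_1\rangle$. Here $\rho$ is given by: - $\rho(\mathbf 0)=\langle 0,a\mapsto\mathbf 0\rangle$ and $\rho(\mathbf 1)=\langle 1,a\mapsto\mathbf 0\rangle$, where the empty sum is the term $\mathbf 0$; - $\rho(\langle x,o,f\rangle+\langle y,p,g\rangle)=\langle\max\{o,p\},a\mapsto f(a)+g(a)\rangle$; - $\rho(\langle x,o,f\rangle\cdot\langle y,p,g\rangle)=\langle\min\{o,p\},a\mapsto f(a)\cdot y\rangle$ if $o=0$; - $\rho(\langle x,o,f\rangle\cdot\langle y,p,g\rangle)=\langle\min\{o,p\},a\mapsto f(a)\cdot y+g(a)\rangle$ if $o=1$. $\lambda$ preserves an axiom $t_1=t_2$ if, for every set $X$ and every instantiation of its variables by elements of $X\times FX$, $\lambda_X(t_1)$ and $\lambda_X(t_2)$ are related by the lifting $\mathrm{Rel}(\mathrm{Id}\times F)$ of the congruence $\ker(q_X)$ on $T_\Sigma X$. This means their term components and their derivatives $a\mapsto(\cdot)$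 at every $a$ are identified modulo the idempotent semiring axioms, and their output bits are equal. A morphism of distributive laws $\tau\colon\lambda\Rightarrow\kappa$ is a monad morphism $\tau$ with $\kappa\circ\tau_H=H\tau\circ\lambda$. *)

theory Defs
  imports Main "HOL-Library.FSet"
begin

datatype 'x sig = SZero | SOne | SPlus 'x 'x | STimes 'x 'x

datatype 'x trm = Var 'x | Op "'x trm sig"

primrec tjoin :: "'x trm trm \<Rightarrow> 'x trm" where
  "tjoin (Var t) = t"
| "tjoin (Op s) = Op (map_sig tjoin s)"

definition tbind :: "'x trm \<Rightarrow> ('x \<Rightarrow> 'y trm) \<Rightarrow> 'y trm" where
  "tbind t s = tjoin (map_trm s t)"

text \<open>The alphabet A is the type 'a; the set 2 = {0,1} is rendered as bool (0 = False, 1 = True).\<close>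

type_synonym ('a, 'x) F = "bool \<times> ('a \<Rightarrow> 'x)"
type_synonym ('a, 'x) H = "'x \<times> bool \<times> ('a \<Rightarrow> 'x)"

definition Fmap :: "('x \<Rightarrow> 'y) \<Rightarrow> ('a, 'x) F \<Rightarrow> ('a, 'y) F" where
  "Fmap f b = (fst b, f \<circ> snd b)"

definition Hmap :: "('x \<Rightarrow> 'y) \<Rightarrow> ('a, 'x) H \<Rightarrow> ('a, 'y) H" where
  "Hmap f h = (f (fst h), Fmap f (snd h))"

fun rho :: "('a, 'x) H sig \<Rightarrow> ('a, 'x trm) F" where
  "rho SZero = (False, \<lambda>a. Op SZero)"
| "rho SOne = (True, \<lambda>a. Op SZero)"
| "rho (SPlus (x, o1, f) (y, p, g)) =
     (max o1 p, \<lambda>a. Op (SPlus (Var (f a)) (Var (g a))))"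
| "rho (STimes (x, o1, f) (y, p, g)) =
     (min o1 p, \<lambda>a. if \<not> o1 then Op (STimes (Var (f a)) (Var y))
                     else Op (SPlus (Op (STimes (Var (f a)) (Var y))) (Var (g a))))"

text \<open>The distributive law lambda of T_Sigma over Id * F induced by rho
  (the standard inductive extension of an abstract GSOS specification).\<close>

primrec lam :: "('a, 'x) H trm \<Rightarrow> ('a, 'x trm) H" where
  "lam (Var h) = Hmap Var h"
| "lam (Op s) = (Op (map_sig fst (map_sig lam s)), Fmap tjoin (rho (map_sig lam s)))"

abbreviation tzero :: "'x trm" where "tzero \<equiv> Op SZero"
abbreviation tone :: "'x trm" where "tone \<equiv> Op SOne"
abbreviation tplus :: "'x trm \<Rightarrow> 'x trm \<Rightarrow> 'x trm" where "tplus t s \<equiv> Op (SPlus t s)"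
abbreviation ttimes :: "'x trm \<Rightarrow> 'x trm \<Rightarrow> 'x trm" where "ttimes t s \<equiv> Op (STimes t s)"

definition isr_axioms :: "(nat trm \<times> nat trm) set" where
  "isr_axioms =
    (let x = Var 0; y = Var 1; z = Var 2 in
     { (tplus (tplus x y) z, tplus x (tplus y z)),
       (tplus x y, tplus y x),
       (tplus x tzero, x),
       (tplus x x, x),
       (ttimes (ttimes x y) z, ttimes x (ttimes y z)),
       (ttimes tone x, x),
       (ttimes x tone, x),
       (ttimes x (tplus y z), tplus (ttimes x y) (ttimes x z)),
       (ttimes (tplus x y) z, tplus (ttimes x z) (ttimes y z)),
       (ttimes tzero x, tzero),
       (ttimes x tzero, tzero) })"

text \<open>The congruence ker(q_X) on T_Sigma X: the equational theory generated by the axioms.\<close>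

inductive isr_eq :: "'x trm \<Rightarrow> 'x trm \<Rightarrow> bool" where
  ax: "(l, r) \<in> isr_axioms \<Longrightarrow> isr_eq (tbind l s) (tbind r s)"
| refl: "isr_eq t t"
| sym: "isr_eq t s \<Longrightarrow> isr_eq s t"
| trans: "isr_eq t s \<Longrightarrow> isr_eq s u \<Longrightarrow> isr_eq t u"
| cong_plus: "isr_eq t t' \<Longrightarrow> isr_eq s s' \<Longrightarrow> isr_eq (tplus t s) (tplus t' s')"
| cong_times: "isr_eq t t' \<Longrightarrow> isr_eq s s' \<Longrightarrow> isr_eq (ttimes t s) (ttimes t' s')"

definition relH :: "('x \<Rightarrow> 'x \<Rightarrow> bool) \<Rightarrow> ('a, 'x) H \<Rightarrow> ('a, 'x) H \<Rightarrow> bool" where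
  "relH R h k \<longleftrightarrow> R (fst h) (fst k) \<and> fst (snd h) = fst (snd k)
                   \<and> (\<forall>a. R (snd (snd h) a) (snd (snd k) a))"

definition preserves_axiom :: "nat trm \<Rightarrow> nat trm \<Rightarrow> 'x itself \<Rightarrow> 'a itself \<Rightarrow> bool" where
  "preserves_axiom t1 t2 _ _ \<longleftrightarrow>
     (\<forall>v :: nat \<Rightarrow> ('a, 'x) H. relH isr_eq (lam (map_trm v t1)) (lam (map_trm v t2)))"

type_synonym 'x PW = "'x list fset"

definition PWmap :: "('x \<Rightarrow> 'y) \<Rightarrow> 'x PW \<Rightarrow> 'y PW" where
  "PWmap f L = map f |`| L"

definition PWunit :: "'x \<Rightarrow> 'x PW" where
  "PWunit x = {|[x]|}"

primrec wprod :: "'x PW list \<Rightarrow> 'x PW" where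
  "wprod [] = {|[]|}"
| "wprod (L # Ls) = ffUnion ((\<lambda>u. (\<lambda>v. u @ v) |`| wprod Ls) |`| L)"

definition PWmult :: "'x PW PW \<Rightarrow> 'x PW" where
  "PWmult M = ffUnion (wprod |`| M)"

text \<open>The composite i o q : T_Sigma => P_omega((-)^*): the quotient map to the free idempotent
  semiring followed by the isomorphism, i.e. the interpretation of terms as finite languages.\<close>

primrec iq :: "'x trm \<Rightarrow> 'x PW" where
  "iq (Var x) = PWunit x"
| "iq (Op s) = (case map_sig iq s of
      SZero \<Rightarrow> {||}
    | SOne \<Rightarrow> {|[]|}
    | SPlus L K \<Rightarrow> L |\<union>| K
    | STimes L K \<Rightarrow> wprod [L, K])"

text \<open>Candidate kappa: since i o q is (componentwise) surjective, a kappa with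
  kappa o (i o q)_H = H(i o q) o lambda is necessarily this one.\<close>

definition kappa :: "('a, 'x) H PW \<Rightarrow> ('a, 'x PW) H" where
  "kappa L = Hmap iq (lam (SOME t. iq t = L))"

end

theory Submission
  imports Defs
begin

text \<open>
  The behaviour that \<open>lam\<close> assigns to a term depends only on the finite language the term
  denotes.  Its output bit records whether the language contains a word all of whose letters
  accept, and its \<open>a\<close>-derivative denotes the language obtained from the words by the iterated
  product rule: differentiate one letter, all of whose predecessors accept, and keep the states
  of the letters after it.  Hence \<open>kappa\<close>, which is forced by surjectivity of the semantics
  \<open>iq\<close>, is given by this explicit formula, and its distributive-law equations are inherited from
  those of \<open>lam\<close> through the surjection.  That \<open>lam\<close> preserves the axioms is checked axiom by
  axiom on the GSOS rules, using only the idempotent semiring laws.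
\<close>

lemma isr_eq_axiom_instances: "\<forall>(l, r) \<in> isr_axioms. isr_eq (tbind l s) (tbind r s)"
  by (blast intro: isr_eq.ax)

lemma
  shows isr_plus_assoc: "isr_eq (tplus (tplus x y) z) (tplus x (tplus y z))"
    and isr_plus_comm: "isr_eq (tplus x y) (tplus y x)"
    and isr_plus_zero: "isr_eq (tplus x tzero) x"
    and isr_plus_idem: "isr_eq (tplus x x) x"
    and isr_times_assoc: "isr_eq (ttimes (ttimes x y) z) (ttimes x (ttimes y z))"
    and isr_one_times: "isr_eq (ttimes tone x) x"
    and isr_times_one: "isr_eq (ttimes x tone) x"
    and isr_distrib_left: "isr_eq (ttimes x (tplus y z)) (tplus (ttimes x y) (ttimes x z))"
    and isr_distrib_right: "isr_eq (ttimes (tplus x y) z) (tplus (ttimes x z) (ttimes y z))"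
    and isr_zero_times: "isr_eq (ttimes tzero x) tzero"
    and isr_times_zero: "isr_eq (ttimes x tzero) tzero"
  using isr_eq_axiom_instances[of "\<lambda>n. [x, y, z] ! n"]
  by (simp_all add: isr_axioms_def Let_def tbind_def)

lemma isr_plus_left_commute: "isr_eq (tplus x (tplus y z)) (tplus y (tplus x z))"
  by (meson isr_eq.cong_plus isr_eq.refl isr_eq.sym isr_eq.trans isr_plus_assoc isr_plus_comm)

lemma isr_plus_interchange: "isr_eq (tplus (tplus w x) (tplus y z)) (tplus (tplus w y) (tplus x z))"
  by (meson isr_eq.cong_plus isr_eq.refl isr_eq.sym isr_eq.trans isr_plus_assoc isr_plus_left_commute)

lemma isr_plus_right_commute: "isr_eq (tplus (tplus x y) z) (tplus (tplus x z) y)"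
  by (meson isr_eq.cong_plus isr_eq.refl isr_eq.sym isr_eq.trans isr_plus_assoc isr_plus_comm)

lemma isr_plus_distrib_idem: "isr_eq (tplus (tplus x y) z) (tplus (tplus x z) (tplus y z))"
  by (meson isr_eq.cong_plus isr_eq.refl isr_eq.sym isr_eq.trans isr_plus_interchange isr_plus_idem)

section \<open>Preservation of the axioms by the GSOS law\<close>

abbreviation lam_term :: "('a, 'x) H trm \<Rightarrow> 'x trm" where "lam_term t \<equiv> fst (lam t)"
abbreviation lam_out :: "('a, 'x) H trm \<Rightarrow> bool" where "lam_out t \<equiv> fst (snd (lam t))"
abbreviation lam_deriv :: "('a, 'x) H trm \<Rightarrow> 'a \<Rightarrow> 'x trm" where "lam_deriv t \<equiv> snd (snd (lam t))"

lemma lam_tzero: "lam tzero = (tzero, False, \<lambda>a. tzero)"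
  by (simp add: Fmap_def o_def)

lemma lam_tone: "lam tone = (tone, True, \<lambda>a. tzero)"
  by (simp add: Fmap_def o_def)

lemma lam_tplus:
  "lam (tplus x y) = (tplus (lam_term x) (lam_term y), lam_out x \<or> lam_out y,
     \<lambda>a. tplus (lam_deriv x a) (lam_deriv y a))"
  by (cases "lam x"; cases "lam y") (auto simp add: Fmap_def o_def max_def)

lemma lam_ttimes:
  "lam (ttimes x y) = (ttimes (lam_term x) (lam_term y), lam_out x \<and> lam_out y,
     \<lambda>a. if lam_out x then tplus (ttimes (lam_deriv x a) (lam_term y)) (lam_deriv y a)
         else ttimes (lam_deriv x a) (lam_term y))"
  by (cases "lam x"; cases "lam y") (auto simp add: Fmap_def o_def min_def)

lemma relH_lam_plus_assoc: "relH isr_eq (lam (tplus (tplus x y) z)) (lam (tplus x (tplus y z)))"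
  unfolding relH_def lam_tplus by (auto intro: isr_plus_assoc)

lemma relH_lam_plus_comm: "relH isr_eq (lam (tplus x y)) (lam (tplus y x))"
  unfolding relH_def lam_tplus by (auto intro: isr_plus_comm)

lemma relH_lam_plus_zero: "relH isr_eq (lam (tplus x tzero)) (lam x)"
  unfolding relH_def lam_tplus lam_tzero by (auto intro: isr_plus_zero)

lemma relH_lam_plus_idem: "relH isr_eq (lam (tplus x x)) (lam x)"
  unfolding relH_def lam_tplus by (auto intro: isr_plus_idem)

lemma relH_lam_times_assoc: "relH isr_eq (lam (ttimes (ttimes x y) z)) (lam (ttimes x (ttimes y z)))"
  unfolding relH_def lam_ttimes
  by (auto intro: isr_times_assoc
      isr_eq.trans[OF isr_distrib_right isr_eq.cong_plus[OF isr_times_assoc isr_eq.refl]]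
      isr_eq.trans[OF isr_eq.cong_plus[OF isr_distrib_right isr_eq.refl]
        isr_eq.trans[OF isr_plus_assoc isr_eq.cong_plus[OF isr_times_assoc isr_eq.refl]]])

lemma relH_lam_one_times: "relH isr_eq (lam (ttimes tone x)) (lam x)"
  unfolding relH_def lam_ttimes lam_tone
  by (auto intro: isr_one_times isr_eq.trans[OF isr_eq.cong_plus[OF isr_zero_times isr_eq.refl]
      isr_eq.trans[OF isr_plus_comm isr_plus_zero]])

lemma relH_lam_times_one: "relH isr_eq (lam (ttimes x tone)) (lam x)"
  unfolding relH_def lam_ttimes lam_tone
  by (auto intro: isr_times_one isr_eq.trans[OF isr_plus_zero isr_times_one])

lemma relH_lam_distrib_left:
  "relH isr_eq (lam (ttimes x (tplus y z))) (lam (tplus (ttimes x y) (ttimes x z)))"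
  unfolding relH_def lam_ttimes lam_tplus
  by (auto intro: isr_distrib_left
      isr_eq.trans[OF isr_eq.cong_plus[OF isr_distrib_left isr_eq.refl] isr_plus_interchange])

lemma relH_lam_distrib_right:
  "relH isr_eq (lam (ttimes (tplus x y) z)) (lam (tplus (ttimes x z) (ttimes y z)))"
  unfolding relH_def lam_ttimes lam_tplus
  by (auto intro: isr_distrib_right isr_plus_distrib_idem isr_plus_right_commute isr_plus_assoc
      isr_eq.trans[OF isr_eq.cong_plus[OF isr_distrib_right isr_eq.refl]])

lemma relH_lam_zero_times: "relH isr_eq (lam (ttimes tzero x)) (lam tzero)"
  unfolding relH_def lam_ttimes lam_tzero by (auto intro: isr_zero_times)

lemma relH_lam_times_zero: "relH isr_eq (lam (ttimes x tzero)) (lam tzero)"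
  unfolding relH_def lam_ttimes lam_tzero
  by (auto intro: isr_times_zero isr_eq.trans[OF isr_plus_zero isr_times_zero])

lemma lam_preserves_isr_axioms: "\<forall>(t1, t2) \<in> isr_axioms. preserves_axiom t1 t2 TYPE('x) TYPE('a)"
  unfolding isr_axioms_def Let_def preserves_axiom_def
  by (simp del: lam.simps add: relH_lam_plus_assoc relH_lam_plus_comm relH_lam_plus_zero
      relH_lam_plus_idem relH_lam_times_assoc relH_lam_one_times relH_lam_times_one
      relH_lam_distrib_left relH_lam_distrib_right relH_lam_zero_times relH_lam_times_zero)

section \<open>Terms as finite languages\<close>

lemma mem_ffUnion_iff [simp]: "x |\<in>| ffUnion A \<longleftrightarrow> (\<exists>B. B |\<in>| A \<and> x |\<in>| B)"
  by (auto simp add: ffUnion.rep_eq)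

lemma mem_wprod_Cons: "w |\<in>| wprod (L # Ls) \<longleftrightarrow> (\<exists>u v. w = u @ v \<and> u |\<in>| L \<and> v |\<in>| wprod Ls)"
  by (auto simp: fimage_iff)

declare wprod.simps(2) [simp del]

lemma mem_wprod_single [simp]: "w |\<in>| wprod [L] \<longleftrightarrow> w |\<in>| L"
  by (simp only: mem_wprod_Cons wprod.simps(1)) auto

lemma mem_wprod_pair [simp]: "w |\<in>| wprod [L, K] \<longleftrightarrow> (\<exists>u v. w = u @ v \<and> u |\<in>| L \<and> v |\<in>| K)"
  by (simp only: mem_wprod_Cons wprod.simps(1)) auto

lemma mem_wprod_append:
  "w |\<in>| wprod (Ls @ Ks) \<longleftrightarrow> (\<exists>u v. w = u @ v \<and> u |\<in>| wprod Ls \<and> v |\<in>| wprod Ks)"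
proof (induction Ls arbitrary: w)
  case (Cons L Ls)
  show ?case
    unfolding append_Cons mem_wprod_Cons Cons.IH by (metis append.assoc)
qed simp

lemma mem_PWmap: "w |\<in>| PWmap f L \<longleftrightarrow> (\<exists>u. w = map f u \<and> u |\<in>| L)"
  by (auto simp: PWmap_def fimage_iff)

lemma mem_PWmult_PWmap: "w |\<in>| PWmult (PWmap g L) \<longleftrightarrow> (\<exists>u. u |\<in>| L \<and> w |\<in>| wprod (map g u))"
  by (auto simp: PWmult_def PWmap_def fimage_iff)

lemma mem_PWunit [simp]: "w |\<in>| PWunit x \<longleftrightarrow> w = [x]"
  by (simp add: PWunit_def)

lemma PWmap_simps [simp]:
  "PWmap f {||} = {||}"
  "PWmap f {|[]|} = {|[]|}"
  "PWmap f (L |\<union>| K) = PWmap f L |\<union>| PWmap f K"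
  by (simp_all add: PWmap_def fimage_funion)

lemma PWmult_simps [simp]:
  "PWmult {||} = {||}"
  "PWmult {|[]|} = {|[]|}"
  "PWmult (M |\<union>| N) = PWmult M |\<union>| PWmult N"
  by (simp_all add: PWmult_def fimage_funion)

lemma PWmap_PWunit [simp]: "PWmap f (PWunit x) = PWunit (f x)"
  by (simp add: PWmap_def PWunit_def)

lemma PWmult_PWunit [simp]: "PWmult (PWunit L) = L"
  by (rule fset_eqI) (simp add: PWmult_def PWunit_def)

lemma PWmap_comp [simp]: "PWmap f (PWmap g L) = PWmap (f \<circ> g) L"
  by (simp add: PWmap_def fset.map_comp o_def)

lemma PWmap_wprod_pair: "PWmap f (wprod [L, K]) = wprod [PWmap f L, PWmap f K]"
  by (rule fset_eqI) (auto simp: mem_PWmap map_eq_append_conv, (metis map_append)+)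

lemma iq_Op_simps [simp]:
  "iq tzero = {||}"
  "iq tone = {|[]|}"
  "iq (tplus s t) = iq s |\<union>| iq t"
  "iq (ttimes s t) = wprod [iq s, iq t]"
  by simp_all

declare iq.simps(2) [simp del]

lemma PWmult_PWmap_wprod_pair:
  "PWmult (PWmap g (wprod [L, K])) = wprod [PWmult (PWmap g L), PWmult (PWmap g K)]"
proof (rule fset_eqI)
  fix w
  have "w |\<in>| wprod [PWmult (PWmap g L), PWmult (PWmap g K)] \<longleftrightarrow>
      (\<exists>u v. u |\<in>| L \<and> v |\<in>| K \<and> w |\<in>| wprod (map g u @ map g v))"
    unfolding mem_wprod_pair mem_PWmult_PWmap mem_wprod_append by blast
  also have "\<dots> \<longleftrightarrow> w |\<in>| PWmult (PWmap g (wprod [L, K]))"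
    unfolding mem_PWmult_PWmap mem_wprod_pair by (metis map_append)
  finally show "w |\<in>| PWmult (PWmap g (wprod [L, K])) \<longleftrightarrow>
      w |\<in>| wprod [PWmult (PWmap g L), PWmult (PWmap g K)]" ..
qed

lemma iq_map_trm: "iq (map_trm f t) = PWmap f (iq t)"
proof (induction t)
  case (Op s)
  then show ?case by (cases s) (simp_all add: PWmap_wprod_pair)
qed simp

lemma iq_tjoin: "iq (tjoin tt) = PWmult (PWmap iq (iq tt))"
proof (induction tt)
  case (Op s)
  then show ?case by (cases s) (simp_all add: PWmult_PWmap_wprod_pair)
qed simp

lemma Fmap_comp [simp]: "Fmap f (Fmap g b) = Fmap (f \<circ> g) b"
  by (simp add: Fmap_def o_assoc)

lemma Hmap_comp [simp]: "Hmap f (Hmap g h) = Hmap (f \<circ> g) h"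
  by (simp add: Hmap_def)

lemma Hmap_id [simp]: "Hmap (\<lambda>x. x) h = h"
  by (simp add: Hmap_def Fmap_def o_def)

lemma fst_lam: "fst (lam t) = map_trm fst t"
proof (induction t)
  case (Op s)
  then show ?case by (cases s) auto
qed (simp add: Hmap_def)

lemma tjoin_map_trm: "tjoin (map_trm (map_trm g) tt) = map_trm g (tjoin tt)"
proof (induction tt)
  case (Op s)
  then show ?case by (cases s) auto
qed simp

lemma tjoin_tjoin: "tjoin (map_trm tjoin ttt) = tjoin (tjoin ttt)"
proof (induction ttt)
  case (Op s)
  then show ?case by (cases s) auto
qed simp

lemma rho_natural: "rho (map_sig (Hmap g) s) = Fmap (map_trm g) (rho s)"
proof (cases s)
  case (SPlus h k)
  then show ?thesis by (cases h; cases k) (simp add: Hmap_def Fmap_def o_def)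
next
  case (STimes h k)
  then show ?thesis by (cases h; cases k) (auto simp add: Hmap_def Fmap_def o_def fun_eq_iff)
qed (simp_all add: Fmap_def o_def)

lemma lam_natural: "lam (map_trm (Hmap g) t) = Hmap (map_trm g) (lam t)"
proof (induction t)
  case (Op s)
  have IH: "map_sig lam (map_sig (map_trm (Hmap g)) s) = map_sig (Hmap (map_trm g)) (map_sig lam s)"
    using Op by (cases s) auto
  have "tjoin \<circ> map_trm (map_trm g) = map_trm g \<circ> tjoin"
    by (rule ext) (simp add: tjoin_map_trm)
  moreover have "map_sig fst (map_sig (Hmap (map_trm g)) X) = map_sig (map_trm g) (map_sig fst X)"
    for X :: "('b, 'c trm) H sig"
    by (cases X) (auto simp: Hmap_def)
  ultimately show ?case
    by (simp only: trm.map lam.simps IH rho_natural Fmap_comp) (simp add: Hmap_def Fmap_def o_assoc)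
qed (simp add: o_def)

lemma lam_tjoin: "lam (tjoin tt) = Hmap tjoin (lam (map_trm lam tt))"
proof (induction tt)
  case (Op s)
  have IH: "map_sig lam (map_sig tjoin s) = map_sig (Hmap tjoin) (map_sig lam (map_sig (map_trm lam) s))"
    using Op by (cases s) auto
  show ?case
    by (simp only: tjoin.simps lam.simps IH rho_natural)
      (cases s; simp add: Hmap_def Fmap_def o_def tjoin_tjoin)
qed (simp add: o_def)

section \<open>The induced distributive law on finite languages\<close>

fun word_derivs :: "'a \<Rightarrow> ('a, 'x) H list \<Rightarrow> 'x PW" where
  "word_derivs a [] = {||}"
| "word_derivs a (h # w) =
     finsert (snd (snd h) a # map fst w) (if fst (snd h) then word_derivs a w else {||})"

definition lang_out :: "('a, 'x) H PW \<Rightarrow> bool" where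
  "lang_out L \<longleftrightarrow> (\<exists>w. w |\<in>| L \<and> (\<forall>h\<in>set w. fst (snd h)))"

definition lang_deriv :: "'a \<Rightarrow> ('a, 'x) H PW \<Rightarrow> 'x PW" where
  "lang_deriv a L = ffUnion (word_derivs a |`| L)"

definition lang_step :: "('a, 'x) H PW \<Rightarrow> ('a, 'x PW) H" where
  "lang_step L = (PWmap fst L, lang_out L, \<lambda>a. lang_deriv a L)"

lemma mem_word_derivs_append:
  "w |\<in>| word_derivs a (u @ v) \<longleftrightarrow>
     (\<exists>p. w = p @ map fst v \<and> p |\<in>| word_derivs a u)
     \<or> (\<forall>h\<in>set u. fst (snd h)) \<and> w |\<in>| word_derivs a v"
  by (induction u arbitrary: w) auto

lemma mem_lang_deriv: "w |\<in>| lang_deriv a L \<longleftrightarrow> (\<exists>u. u |\<in>| L \<and> w |\<in>| word_derivs a u)"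
  by (auto simp: lang_deriv_def fimage_iff)

lemma lang_out_simps [simp]:
  "\<not> lang_out {||}"
  "lang_out {|[]|}"
  "lang_out (L |\<union>| K) \<longleftrightarrow> lang_out L \<or> lang_out K"
  "lang_out (PWunit h) \<longleftrightarrow> fst (snd h)"
  by (auto simp add: lang_out_def)

lemma lang_out_wprod_pair [simp]: "lang_out (wprod [L, K]) \<longleftrightarrow> lang_out L \<and> lang_out K"
proof
  assume "lang_out (wprod [L, K])"
  then obtain u v where "u |\<in>| L" "v |\<in>| K" "\<forall>h\<in>set (u @ v). fst (snd h)"
    unfolding lang_out_def mem_wprod_pair by blast
  then show "lang_out L \<and> lang_out K"
    unfolding lang_out_def by auto
next
  assume "lang_out L \<and> lang_out K"
  then obtain u v where "u |\<in>| L" "\<forall>h\<in>set u. fst (snd h)" "v |\<in>| K" "\<forall>h\<in>set v. fst (snd h)"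
    unfolding lang_out_def by blast
  then show "lang_out (wprod [L, K])"
    unfolding lang_out_def mem_wprod_pair by (intro exI[of _ "u @ v"]) auto
qed

lemma lang_deriv_simps [simp]:
  "lang_deriv a {||} = {||}"
  "lang_deriv a {|[]|} = {||}"
  "lang_deriv a (L |\<union>| K) = lang_deriv a L |\<union>| lang_deriv a K"
  "lang_deriv a (PWunit h) = PWunit (snd (snd h) a)"
  by (simp_all add: lang_deriv_def fimage_funion PWunit_def)

lemma lang_deriv_wprod_pair:
  "lang_deriv a (wprod [L, K]) =
     wprod [lang_deriv a L, PWmap fst K] |\<union>| (if lang_out L then lang_deriv a K else {||})"
proof (rule fset_eqI, rule iffI)
  fix w
  assume "w |\<in>| lang_deriv a (wprod [L, K])"
  then obtain u v where "u |\<in>| L" "v |\<in>| K" "w |\<in>| word_derivs a (u @ v)"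
    unfolding mem_lang_deriv mem_wprod_pair by blast
  then show "w |\<in>| wprod [lang_deriv a L, PWmap fst K] |\<union>| (if lang_out L then lang_deriv a K else {||})"
    unfolding mem_word_derivs_append
    by (auto simp: mem_lang_deriv mem_PWmap lang_out_def)
next
  fix w
  assume "w |\<in>| wprod [lang_deriv a L, PWmap fst K] |\<union>| (if lang_out L then lang_deriv a K else {||})"
  then consider
      (left) p u v where "w = p @ map fst v" "u |\<in>| L" "v |\<in>| K" "p |\<in>| word_derivs a u"
    | (right) u v where "u |\<in>| L" "\<forall>h\<in>set u. fst (snd h)" "v |\<in>| K" "w |\<in>| word_derivs a v"
    by (auto simp: mem_lang_deriv mem_PWmap lang_out_def split: if_splits)
  then show "w |\<in>| lang_deriv a (wprod [L, K])"
  proof cases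
    case left
    then show ?thesis unfolding mem_lang_deriv mem_wprod_pair
      by (intro exI[of _ "u @ v"]) (auto simp: mem_word_derivs_append)
  next
    case right
    then show ?thesis unfolding mem_lang_deriv mem_wprod_pair
      by (intro exI[of _ "u @ v"]) (auto simp: mem_word_derivs_append)
  qed
qed

lemma lam_out_eq_lang_out: "lam_out t = lang_out (iq t)"
proof (induction t)
  case (Op s)
  then show ?case
    by (cases s) (simp_all add: lam_tzero lam_tone lam_tplus lam_ttimes del: lam.simps)
qed (simp add: Hmap_def Fmap_def)

lemma iq_lam_deriv: "iq (lam_deriv t a) = lang_deriv a (iq t)"
proof (induction t)
  case (Op s)
  then show ?case
    by (cases s) (simp_all add: lam_tzero lam_tone lam_tplus lam_ttimes lang_deriv_wprod_pair
        lam_out_eq_lang_out fst_lam iq_map_trm del: lam.simps)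
qed (simp add: Hmap_def Fmap_def)

lemma Hmap_iq_lam: "Hmap iq (lam t) = lang_step (iq t)"
  by (simp add: Hmap_def Fmap_def lang_step_def fun_eq_iff iq_lam_deriv lam_out_eq_lang_out
      fst_lam iq_map_trm)

primrec word_trm :: "'x list \<Rightarrow> 'x trm" where
  "word_trm [] = tone"
| "word_trm (x # w) = ttimes (Var x) (word_trm w)"

lemma iq_word_trm: "iq (word_trm w) = {|w|}"
proof (induction w)
  case (Cons x w)
  then show ?case by (intro fset_eqI) simp
qed simp

lemma iq_surj: "\<exists>t. iq t = L"
proof (induction L rule: fset_induct)
  case empty
  show ?case by (intro exI[of _ tzero]) simp
next
  case (insert w L)
  then obtain t where "iq t = L" by blast
  then show ?case by (intro exI[of _ "tplus (word_trm w) t"]) (simp add: iq_word_trm)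
qed

lemma iq_SOME: "iq (SOME t. iq t = L) = L"
  using iq_surj by (rule someI_ex)

lemma kappa_eq_lang_step: "kappa L = lang_step L"
  by (simp add: kappa_def Hmap_iq_lam iq_SOME)

lemma kappa_iq: "kappa (iq t) = Hmap iq (lam t)"
  by (simp add: kappa_eq_lang_step Hmap_iq_lam)

lemma fst_kappa: "fst (kappa L) = PWmap fst L"
  by (simp add: kappa_eq_lang_step lang_step_def)

lemma kappa_PWunit: "kappa (PWunit h) = Hmap PWunit h"
  by (simp add: kappa_eq_lang_step lang_step_def Hmap_def Fmap_def o_def)

lemma kappa_PWmap: "kappa (PWmap (Hmap f) L) = Hmap (PWmap f) (kappa L)"
proof -
  obtain t where t: "iq t = L" using iq_surj by blast
  have "kappa (PWmap (Hmap f) L) = kappa (iq (map_trm (Hmap f) t))"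
    by (simp add: t iq_map_trm)
  also have "\<dots> = Hmap iq (Hmap (map_trm f) (lam t))"
    by (simp only: kappa_iq lam_natural)
  also have "\<dots> = Hmap (PWmap f) (Hmap iq (lam t))"
    by (simp add: iq_map_trm o_def)
  also have "\<dots> = Hmap (PWmap f) (kappa L)"
    by (simp only: t[symmetric] kappa_iq)
  finally show ?thesis .
qed

lemma kappa_PWmult: "kappa (PWmult M) = Hmap PWmult (kappa (PWmap kappa M))"
proof -
  obtain T where T: "iq T = M" using iq_surj by blast
  define tt where "tt = map_trm (\<lambda>L. SOME t. iq t = L) T"
  have M: "M = PWmap iq (iq tt)"
    by (simp add: tt_def iq_map_trm T o_def iq_SOME PWmap_def)
  have "kappa (PWmult M) = kappa (iq (tjoin tt))"
    by (simp add: M iq_tjoin)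
  also have "\<dots> = Hmap iq (Hmap tjoin (lam (map_trm lam tt)))"
    by (simp only: kappa_iq lam_tjoin)
  also have "\<dots> = Hmap PWmult (Hmap iq (Hmap (map_trm iq) (lam (map_trm lam tt))))"
    by (simp add: iq_tjoin iq_map_trm o_def)
  also have "\<dots> = Hmap PWmult (kappa (iq (map_trm (Hmap iq) (map_trm lam tt))))"
    by (simp only: kappa_iq lam_natural)
  also have "iq (map_trm (Hmap iq) (map_trm lam tt)) = PWmap kappa M"
    by (simp add: M iq_map_trm trm.map_comp o_def kappa_iq)
  finally show ?thesis .
qed

theorem mainTheorem11:
  fixes f :: "'x \<Rightarrow> 'y"
  shows
    "(\<forall>(t1, t2) \<in> isr_axioms. preserves_axiom t1 t2 TYPE('x) TYPE('a))
   \<and> (\<forall>t :: 'x trm. iq (map_trm f t) = PWmap f (iq t))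
   \<and> (\<forall>x :: 'x. iq (Var x) = PWunit x)
   \<and> (\<forall>tt :: 'x trm trm. iq (tjoin tt) = PWmult (PWmap iq (iq tt)))
   \<and> (\<forall>L :: ('a, 'x) H PW. kappa (PWmap (Hmap f) L) = Hmap (PWmap f) (kappa L))
   \<and> (\<forall>h :: ('a, 'x) H. kappa (PWunit h) = Hmap PWunit h)
   \<and> (\<forall>M :: ('a, 'x) H PW PW. kappa (PWmult M) = Hmap PWmult (kappa (PWmap kappa M)))
   \<and> (\<forall>L :: ('a, 'x) H PW. fst (kappa L) = PWmap fst L)
   \<and> (\<forall>t :: ('a, 'x) H trm. kappa (iq t) = Hmap iq (lam t))"
  by (intro conjI allI lam_preserves_isr_axioms iq_map_trm iq.simps(1) iq_tjoin
      kappa_PWmap kappa_PWunit kappa_PWmult fst_kappa kappa_iq)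

end
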